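(* Let $Q$ be a sketch with $d$ parameter holes, let $z$ be a trajectory, and let $\theta,\theta'\in\mathbb{R}^d$ satisfy $\theta\le\theta'$ componentwise. Then $[\![Q_\theta]\!](z)\ge[\![Q_{\theta'}]\!](z)$.
   Context: Fix a set $\mathcal{X}$ of states. A trajectory is a finite sequence $z=(x_0,\dots,x_{n-1})\in\mathcal{X}^*$ of length $|z|=n$; for $0\le i\le j\le n$ write $z_{i:j}=(x_i,\dots,x_{j-1})$ (the empty sequence if $i=j$). Fix a set of predicates of two kinds: a non-parametric predicate $\varphi$ comes with a satisfaction function $\mathsf{sat}_\varphi:\mathcal{X}^*\to\{0,1\}$, and a parametric predicate $\varphi$ comes with a bounded scoring function $\iota_\varphi:\mathcal{X}^*\to\mathbb{R}$. Sketches are generated by the grammar $Q::=\varphi_{??i}\mid\varphi\mid Q\,;\,Q\mid Q^k\mid Q\wedge Q$, where in $\varphi_{??i}$ the predicate $\varphi$ is parametric and $??i$ is a parameter hole labelled by an index $i\in\{1,\dots,d\}$ ($d$ being the number of parameter holes of the sketch), in the second case $\varphi$ is non-parametric, and $Q^k$ ($k\ge1$) abbreviates the $k$-fold sequencing $Q\,;\,Q\,;\cdots;\,Q$. For $\theta\in\mathbb{R}^d$, $Q_\theta$ denotes the query obtained by filling each hole $??i$ with $\theta_i$. The (Boolean) semantics of a filled query on a trajectory $z$ of length $n$ is: $[\![\varphi_{\theta_i}]\!](z)=\mathbb{1}(\iota_\varphi(z)\ge\theta_i)$; $[\![\varphi]\!](z)=\mathsf{sat}_\varphi(z)$; $[\![Q_1\wedge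 Q_2]\!](z)=[\![Q_1]\!](z)\wedge[\![Q_2]\!](z)$; $[\![Q_1\,;\,Q_2]\!](z)=\bigvee_{k=0}^{n}\big([\![Q_1]\!](z_{0:k})\wedge[\![Q_2]\!](z_{k:n})\big)$. *)

theory Defs
  imports "HOL-Analysis.Analysis"
begin

datatype ('p, 'q) sketch =
    PHole 'p nat
  | NPred 'q
  | Seq "('p, 'q) sketch" "('p, 'q) sketch"
  | Rep "('p, 'q) sketch" nat
  | Conj "('p, 'q) sketch" "('p, 'q) sketch"

fun holes :: "('p, 'q) sketch \<Rightarrow> nat set" where
  "holes (PHole p i) = {i}"
| "holes (NPred q) = {}"
| "holes (Seq a b) = holes a \<union> holes b"
| "holes (Rep a k) = holes a"
| "holes (Conj a b) = holes a \<union> holes b"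

fun wf_sketch :: "('p, 'q) sketch \<Rightarrow> bool" where
  "wf_sketch (PHole p i) = True"
| "wf_sketch (NPred q) = True"
| "wf_sketch (Seq a b) = (wf_sketch a \<and> wf_sketch b)"
| "wf_sketch (Rep a k) = (k \<ge> 1 \<and> wf_sketch a)"
| "wf_sketch (Conj a b) = (wf_sketch a \<and> wf_sketch b)"

definition slice :: "'x list \<Rightarrow> nat \<Rightarrow> nat \<Rightarrow> 'x list" where
  "slice z i j = take (j - i) (drop i z)"

definition seq_sem :: "('x list \<Rightarrow> bool) \<Rightarrow> ('x list \<Rightarrow> bool) \<Rightarrow> 'x list \<Rightarrow> bool" where
  "seq_sem A B z = (\<exists>k\<in>{0..length z}. A (slice z 0 k) \<and> B (slice z k (length z)))"

(* Q^k (k >= 1) is the k-fold sequencing Q ; Q ; ... ; Q. *)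
fun sem :: "('p \<Rightarrow> 'x list \<Rightarrow> real) \<Rightarrow> ('q \<Rightarrow> 'x list \<Rightarrow> bool) \<Rightarrow>
            (nat \<Rightarrow> real) \<Rightarrow> ('p, 'q) sketch \<Rightarrow> 'x list \<Rightarrow> bool" where
  "sem iota sat theta (PHole p i) = (\<lambda>z. iota p z \<ge> theta i)"
| "sem iota sat theta (NPred q) = sat q"
| "sem iota sat theta (Conj a b) = (\<lambda>z. sem iota sat theta a z \<and> sem iota sat theta b z)"
| "sem iota sat theta (Seq a b) = seq_sem (sem iota sat theta a) (sem iota sat theta b)"
| "sem iota sat theta (Rep a k) =
     ((seq_sem (sem iota sat theta a)) ^^ (k - 1)) (sem iota sat theta a)"

end

(* Raising a threshold can only shrink the set of trajectories accepted by a
   parametric atom, and conjunction, sequencing and iterated sequencing are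
   monotone in their arguments; structural induction on the sketch finishes. *)
theory Submission
  imports Defs
begin

lemma seq_sem_mono:
  assumes "A \<le> A'" and "B \<le> B'"
  shows "seq_sem A B \<le> seq_sem A' B'"
  using assms unfolding seq_sem_def le_fun_def le_bool_def by blast

lemma funpow_seq_sem_mono:
  assumes "A \<le> A'" and "B \<le> B'"
  shows "(seq_sem A ^^ n) B \<le> (seq_sem A' ^^ n) B'"
proof (induction n)
  case 0
  show ?case using assms(2) by simp
next
  case (Suc n)
  show ?case using seq_sem_mono[OF assms(1) Suc.IH] by simp
qed

lemma sem_antimono_thresholds:
  assumes "\<forall>i\<in>holes Q. theta i \<le> theta' i"
  shows "sem iota sat theta' Q \<le> sem iota sat theta Q"
  using assms
proof (induction Q)
  case (PHole p i)
  then show ?case by (auto simp: le_fun_def)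
next
  case (NPred q)
  show ?case by simp
next
  case (Seq a b)
  then show ?case by (simp add: seq_sem_mono)
next
  case (Rep a k)
  then show ?case by (simp add: funpow_seq_sem_mono)
next
  case (Conj a b)
  then show ?case by (auto simp: le_fun_def)
qed

theorem lemma1:
  fixes Q :: "('p, 'q) sketch" and d :: nat and z :: "'x list"
    and iota :: "'p \<Rightarrow> 'x list \<Rightarrow> real" and sat :: "'q \<Rightarrow> 'x list \<Rightarrow> bool"
    and theta theta' :: "nat \<Rightarrow> real"
  assumes "wf_sketch Q"
    and "holes Q \<subseteq> {1..d}"
    and "\<forall>p. bounded (range (iota p))"
    and "\<forall>i\<in>{1..d}. theta i \<le> theta' i"
  shows "sem iota sat theta' Q z \<le> sem iota sat theta Q z"
proof -
  have "\<forall>i\<in>holes Q. theta i \<le> theta' i"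
    using assms(2,4) by blast
  then show ?thesis
    by (rule sem_antimono_thresholds[THEN le_funD])
qed

end
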